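(* For every integer $k>4$ there exists a finite simple graph $G$ such that, defining $G_0=G$ and $G_{t+1}=P^k(G_t)$ for $t\ge 0$, we have $G_{t+1}\neq G_t$ for every $t\ge 0$. In other words, iterating $k$-intersection polishing starting from $G$ never reaches a $k$-intersection polished graph.
   Context: All graphs are finite and simple. For a vertex $v$, $N[v]$ denotes its closed neighbourhood (the set of neighbours of $v$ together with $v$). For an integer $k$, $P^k(G)$ is the graph on the same vertex set as $G$ in which two distinct vertices $u,v$ are adjacent if and only if $|N[u]\cap N[v]|\ge k$, the closed neighbourhoods being taken in $G$. A graph $G$ is called $k$-intersection polished if $P^k(G)=G$ (equality of edge sets on the same vertex set). *)

theory Defs
  imports Main
begin

definition simple_graph :: "'a set \<Rightarrow> 'a set set \<Rightarrow> bool" where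
  "simple_graph V E \<longleftrightarrow> finite V \<and> (\<forall>e\<in>E. e \<subseteq> V \<and> card e = 2)"

definition closed_nbhd :: "'a set set \<Rightarrow> 'a \<Rightarrow> 'a set" where
  "closed_nbhd E v = insert v {u. {u, v} \<in> E}"

definition polish :: "nat \<Rightarrow> 'a set \<Rightarrow> 'a set set \<Rightarrow> 'a set set" where
  "polish k V E = {{u, v} | u v. u \<in> V \<and> v \<in> V \<and> u \<noteq> v \<and>
                      card (closed_nbhd E u \<inter> closed_nbhd E v) \<ge> k}"

end

theory Submission
  imports Defs
begin

text \<open>Take the Cayley graph of \<open>\<int>/9\<close> with connection set \<open>D\<close> and replace every vertex by a
clique of \<open>m\<close> vertices, where \<open>2m < k \<le> 3m\<close> (possible exactly because \<open>k > 4\<close>). Common closed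
neighbourhoods are unions of whole cliques, so two vertices keep or gain an edge under \<open>P\<^sup>k\<close>
iff their residues have at least three common closed neighbours in the Cayley graph. The result is
again such a blow-up, with a new connection set; for \<open>D = {0,1,3,6,8}\<close> this cycles with period
three through \<open>{0,2,3,6,7}\<close> and \<open>{0,3,4,5,6}\<close>, so no fixed point is ever reached.\<close>

text \<open>The residue of \<open>u - v\<close> modulo \<open>n\<close>, written so as to avoid truncated subtraction.\<close>

definition circ_diff :: "nat \<Rightarrow> nat \<Rightarrow> nat \<Rightarrow> nat" where
  "circ_diff n u v = (u mod n + n - v mod n) mod n"

definition circulant_symmetric :: "nat \<Rightarrow> nat set \<Rightarrow> bool" where
  "circulant_symmetric n D \<longleftrightarrow> (\<forall>a<n. \<forall>b<n. circ_diff n a b \<in> D \<longleftrightarrow> circ_diff n b a \<in> D)"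

text \<open>Vertex \<open>u < n * m\<close> is copy \<open>u div n\<close> of residue \<open>u mod n\<close>; when \<open>0 \<in> D\<close> every
residue class is a clique, so this is the lexicographic product of the circulant graph of \<open>D\<close>
with \<open>K\<^sub>m\<close>.\<close>

definition circulant_blowup :: "nat \<Rightarrow> nat \<Rightarrow> nat set \<Rightarrow> nat set set" where
  "circulant_blowup n m D =
     {{u, v} | u v. u < n * m \<and> v < n * m \<and> u \<noteq> v \<and> circ_diff n u v \<in> D}"

definition common_count :: "nat \<Rightarrow> nat set \<Rightarrow> nat \<Rightarrow> nat \<Rightarrow> nat" where
  "common_count n D a b = card {c. c < n \<and> circ_diff n a c \<in> D \<and> circ_diff n b c \<in> D}"

lemma circ_diff_mod_left [simp]: "circ_diff n (u mod n) v = circ_diff n u v"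
  and circ_diff_mod_right [simp]: "circ_diff n u (v mod n) = circ_diff n u v"
  by (simp_all add: circ_diff_def)

lemma circ_diff_self [simp]: "circ_diff n u u = 0"
  by (simp add: circ_diff_def)

lemma common_count_mod [simp]: "common_count n D (a mod n) (b mod n) = common_count n D a b"
  by (simp add: common_count_def)

lemma common_count_eq_length:
  "common_count n D a b =
     length (filter (\<lambda>c. circ_diff n a c \<in> D \<and> circ_diff n b c \<in> D) [0..<n])"
  unfolding common_count_def by (simp add: distinct_card[symmetric] Collect_conj_eq[symmetric])

lemma circulant_symmetricD:
  assumes "circulant_symmetric n D" and "0 < n"
  shows "circ_diff n u v \<in> D \<longleftrightarrow> circ_diff n v u \<in> D"
  using assms unfolding circulant_symmetric_def
  by (metis circ_diff_mod_left circ_diff_mod_right mod_less_divisor)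

lemma simple_graph_circulant_blowup: "simple_graph {..<n * m} (circulant_blowup n m D)"
  unfolding simple_graph_def circulant_blowup_def by auto

lemma doubleton_mem_circulant_blowup:
  assumes "circulant_symmetric n D" and "0 < n"
  shows "{x, y} \<in> circulant_blowup n m D \<longleftrightarrow>
           x < n * m \<and> y < n * m \<and> x \<noteq> y \<and> circ_diff n x y \<in> D"
  unfolding circulant_blowup_def using circulant_symmetricD[OF assms]
  by (auto simp: doubleton_eq_iff)

lemma closed_nbhd_circulant_blowup:
  assumes "circulant_symmetric n D" and "0 < n" and "0 \<in> D" and "u < n * m"
  shows "closed_nbhd (circulant_blowup n m D) u = {w. w < n * m \<and> circ_diff n u w \<in> D}"
  unfolding closed_nbhd_def using assms doubleton_mem_circulant_blowup[OF assms(1,2)]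
    circulant_symmetricD[OF assms(1,2), of u]
  by auto

lemma card_residue_class:
  assumes "R \<subseteq> {..<n}"
  shows "card {w. w < n * m \<and> w mod n \<in> R} = card R * m"
proof -
  have "bij_betw (\<lambda>w. (w mod n, w div n)) {w. w < n * m \<and> w mod n \<in> R} (R \<times> {..<m})"
  proof (rule bij_betw_byWitness[where f' = "\<lambda>(a, i). a + n * i"])
    show "\<forall>p \<in> R \<times> {..<m}. (\<lambda>w. (w mod n, w div n)) ((\<lambda>(a, i). a + n * i) p) = p"
      using assms by auto
    show "(\<lambda>w. (w mod n, w div n)) ` {w. w < n * m \<and> w mod n \<in> R} \<subseteq> R \<times> {..<m}"
      by (auto simp: less_mult_imp_div_less mult.commute)
    show "(\<lambda>(a, i). a + n * i) ` (R \<times> {..<m}) \<subseteq> {w. w < n * m \<and> w mod n \<in> R}"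
    proof clarify
      fix a i assume "a \<in> R" "i < m"
      have "a < n" using \<open>a \<in> R\<close> assms by auto
      have "a + n * i < n * Suc i" using \<open>a < n\<close> by simp
      also have "\<dots> \<le> n * m" using \<open>i < m\<close> by (intro mult_le_mono2) simp
      finally show "a + n * i < n * m \<and> (a + n * i) mod n \<in> R"
        using \<open>a < n\<close> \<open>a \<in> R\<close> by simp
    qed
  qed simp
  then show ?thesis
    by (simp add: bij_betw_same_card card_cartesian_product)
qed

lemma card_common_nbhd_circulant_blowup:
  assumes "circulant_symmetric n D" and "0 < n" and "0 \<in> D"
    and "u < n * m" and "v < n * m"
  shows "card (closed_nbhd (circulant_blowup n m D) u \<inter> closed_nbhd (circulant_blowup n m D) v)
           = common_count n D u v * m"
proof -
  let ?C = "{c. c < n \<and> circ_diff n u c \<in> D \<and> circ_diff n v c \<in> D}"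
  have "closed_nbhd (circulant_blowup n m D) u \<inter> closed_nbhd (circulant_blowup n m D) v
          = {w. w < n * m \<and> w mod n \<in> ?C}"
    unfolding closed_nbhd_circulant_blowup[OF assms(1-4)] closed_nbhd_circulant_blowup[OF assms(1-3,5)]
  proof (intro set_eqI iffI)
    fix w assume "w \<in> {w. w < n * m \<and> circ_diff n u w \<in> D} \<inter> {w. w < n * m \<and> circ_diff n v w \<in> D}"
    then show "w \<in> {w. w < n * m \<and> w mod n \<in> ?C}" using \<open>0 < n\<close> by simp
  next
    fix w assume "w \<in> {w. w < n * m \<and> w mod n \<in> ?C}"
    then show "w \<in> {w. w < n * m \<and> circ_diff n u w \<in> D} \<inter> {w. w < n * m \<and> circ_diff n v w \<in> D}"
      by simp
  qed
  moreover have "card {w. w < n * m \<and> w mod n \<in> ?C} = card ?C * m"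
    by (rule card_residue_class) auto
  ultimately show ?thesis
    unfolding common_count_def by (simp only:)
qed

lemma threshold_mult_iff:
  fixes k j m x :: nat
  assumes "k \<le> j * m" and "j * m < k + m"
  shows "k \<le> x * m \<longleftrightarrow> j \<le> x"
proof
  assume "k \<le> x * m"
  show "j \<le> x"
  proof (rule ccontr)
    assume "\<not> j \<le> x"
    then have "x * m + m \<le> j * m"
      by (metis Suc_leI mult_Suc not_le_imp_less add.commute mult_le_mono1)
    then show False using assms(2) \<open>k \<le> x * m\<close> by linarith
  qed
next
  assume "j \<le> x"
  then show "k \<le> x * m" using assms(1) mult_le_mono1 order_trans by blast
qed

lemma funpow_Suc_neq_of_invariant:
  assumes "\<forall>x\<in>S. f x \<in> S \<and> f x \<noteq> x" and "a \<in> S"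
  shows "(f ^^ Suc t) a \<noteq> (f ^^ t) a"
proof -
  have "(f ^^ t) a \<in> S" by (induction t) (use assms in auto)
  then show ?thesis using assms(1) by simp
qed

lemma polish_circulant_blowup:
  assumes "circulant_symmetric n D" and "0 < n" and "0 \<in> D"
    and "k \<le> j * m" and "j * m < k + m"
    and succ: "\<forall>a<n. \<forall>b<n. j \<le> common_count n D a b \<longleftrightarrow> circ_diff n a b \<in> D'"
  shows "polish k {..<n * m} (circulant_blowup n m D) = circulant_blowup n m D'"
proof -
  have "k \<le> card (closed_nbhd (circulant_blowup n m D) u \<inter> closed_nbhd (circulant_blowup n m D) v)
          \<longleftrightarrow> circ_diff n u v \<in> D'"
    if "u < n * m" "v < n * m" for u v
  proof -
    have "j \<le> common_count n D u v \<longleftrightarrow> circ_diff n u v \<in> D'"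
      using succ[rule_format, of "u mod n" "v mod n"] \<open>0 < n\<close> by simp
    then show ?thesis
      using card_common_nbhd_circulant_blowup[OF assms(1-3) that]
        threshold_mult_iff[OF assms(4,5)] by simp
  qed
  then show ?thesis
    unfolding polish_def circulant_blowup_def by (auto 0 3)
qed

lemma edge_zero_mem_circulant_blowup_iff:
  assumes "circulant_symmetric n D" and "0 < d" and "d < n" and "0 < m"
  shows "{d, 0} \<in> circulant_blowup n m D \<longleftrightarrow> d \<in> D"
proof -
  have "d < n * m" using assms(3,4) by (simp add: less_le_trans)
  then show ?thesis
    using doubleton_mem_circulant_blowup[OF assms(1)] assms(2-4) by (simp add: circ_diff_def)
qed

lemma all_less_iff_all_upt: "(\<forall>a<n. P a) \<longleftrightarrow> (\<forall>a\<in>set [0..<n]. P a)"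
  by auto

lemma circulant_symmetric_Z9:
  "circulant_symmetric 9 {0, 1, 3, 6, 8}"
  "circulant_symmetric 9 {0, 2, 3, 6, 7}"
  "circulant_symmetric 9 {0, 3, 4, 5, 6}"
  unfolding circulant_symmetric_def circ_diff_def all_less_iff_all_upt
  by code_simp+

lemma common_count_cycle_Z9:
  "\<forall>a<9. \<forall>b<9. 3 \<le> common_count 9 {0, 1, 3, 6, 8} a b \<longleftrightarrow> circ_diff 9 a b \<in> {0, 2, 3, 6, 7}"
  "\<forall>a<9. \<forall>b<9. 3 \<le> common_count 9 {0, 2, 3, 6, 7} a b \<longleftrightarrow> circ_diff 9 a b \<in> {0, 3, 4, 5, 6}"
  "\<forall>a<9. \<forall>b<9. 3 \<le> common_count 9 {0, 3, 4, 5, 6} a b \<longleftrightarrow> circ_diff 9 a b \<in> {0, 1, 3, 6, 8}"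
  unfolding common_count_eq_length circ_diff_def all_less_iff_all_upt
  by code_simp+

lemma polish_circulant_blowup_cycle_Z9:
  assumes "k \<le> 3 * m" and "3 * m < k + m"
  shows "polish k {..<9 * m} (circulant_blowup 9 m {0, 1, 3, 6, 8}) = circulant_blowup 9 m {0, 2, 3, 6, 7}"
    and "polish k {..<9 * m} (circulant_blowup 9 m {0, 2, 3, 6, 7}) = circulant_blowup 9 m {0, 3, 4, 5, 6}"
    and "polish k {..<9 * m} (circulant_blowup 9 m {0, 3, 4, 5, 6}) = circulant_blowup 9 m {0, 1, 3, 6, 8}"
  using polish_circulant_blowup[OF circulant_symmetric_Z9(1) _ _ assms common_count_cycle_Z9(1)]
    polish_circulant_blowup[OF circulant_symmetric_Z9(2) _ _ assms common_count_cycle_Z9(2)]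
    polish_circulant_blowup[OF circulant_symmetric_Z9(3) _ _ assms common_count_cycle_Z9(3)]
  by simp_all

lemma circulant_blowup_cycle_Z9_distinct:
  assumes "0 < m"
  shows "circulant_blowup 9 m {0, 2, 3, 6, 7} \<noteq> circulant_blowup 9 m {0, 1, 3, 6, 8}"
    and "circulant_blowup 9 m {0, 3, 4, 5, 6} \<noteq> circulant_blowup 9 m {0, 2, 3, 6, 7}"
    and "circulant_blowup 9 m {0, 1, 3, 6, 8} \<noteq> circulant_blowup 9 m {0, 3, 4, 5, 6}"
  using edge_zero_mem_circulant_blowup_iff[OF circulant_symmetric_Z9(1), of 1 m]
    edge_zero_mem_circulant_blowup_iff[OF circulant_symmetric_Z9(2), of 1 m]
    edge_zero_mem_circulant_blowup_iff[OF circulant_symmetric_Z9(2), of 2 m]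
    edge_zero_mem_circulant_blowup_iff[OF circulant_symmetric_Z9(3), of 1 m]
    edge_zero_mem_circulant_blowup_iff[OF circulant_symmetric_Z9(3), of 2 m] assms
  by auto

theorem theorem2:
  fixes k :: nat
  assumes "k > 4"
  shows "\<exists>(V :: nat set) E. simple_graph V E \<and>
           (\<forall>t. (polish k V ^^ Suc t) E \<noteq> (polish k V ^^ t) E)"
proof -
  define m where "m = (k + 2) div 3"
  have m: "k \<le> 3 * m" "3 * m < k + m" "0 < m" using assms unfolding m_def by arith+
  define G\<^sub>0 G\<^sub>1 G\<^sub>2 where "G\<^sub>0 = circulant_blowup 9 m {0, 1, 3, 6, 8}"
    and "G\<^sub>1 = circulant_blowup 9 m {0, 2, 3, 6, 7}" and "G\<^sub>2 = circulant_blowup 9 m {0, 3, 4, 5, 6}"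
  have "polish k {..<9 * m} G\<^sub>0 = G\<^sub>1" "polish k {..<9 * m} G\<^sub>1 = G\<^sub>2" "polish k {..<9 * m} G\<^sub>2 = G\<^sub>0"
    unfolding G\<^sub>0_def G\<^sub>1_def G\<^sub>2_def by (fact polish_circulant_blowup_cycle_Z9[OF m(1,2)])+
  moreover have "G\<^sub>1 \<noteq> G\<^sub>0" "G\<^sub>2 \<noteq> G\<^sub>1" "G\<^sub>0 \<noteq> G\<^sub>2"
    unfolding G\<^sub>0_def G\<^sub>1_def G\<^sub>2_def by (fact circulant_blowup_cycle_Z9_distinct[OF m(3)])+
  ultimately have orbit: "\<forall>G\<in>{G\<^sub>0, G\<^sub>1, G\<^sub>2}.
      polish k {..<9 * m} G \<in> {G\<^sub>0, G\<^sub>1, G\<^sub>2} \<and> polish k {..<9 * m} G \<noteq> G"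
    by auto
  have "\<forall>t. (polish k {..<9 * m} ^^ Suc t) G\<^sub>0 \<noteq> (polish k {..<9 * m} ^^ t) G\<^sub>0"
    using funpow_Suc_neq_of_invariant[OF orbit, of G\<^sub>0] by simp
  moreover have "simple_graph {..<9 * m} G\<^sub>0"
    unfolding G\<^sub>0_def by (rule simple_graph_circulant_blowup)
  ultimately show ?thesis by blast
qed

end
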